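(* Let $M$ be a deterministic finite automaton that satisfies the partial order condition. Then the minimal deterministic finite automaton accepting $L(M)$ also satisfies the partial order condition.
   Context: A DFA $(Q,\Sigma,\delta,q_0,F)$ (with $\delta$ extended to strings) satisfies the partial order condition if there do not exist two distinguishable states $q_1,q_2\in Q$ and strings $x,y\in\Sigma^+$ with $\delta(q_1,x)=\delta(q_2,x)=q_2$ and $\delta(q_2,y)=q_1$; here $q_1,q_2$ are distinguishable if there is $z\in\Sigma^*$ such that exactly one of $\delta(q_1,z),\delta(q_2,z)$ lies in $F$. *)

theory Defs
  imports Main
begin

record ('q, 'a) dfa =
  states :: "'q set"
  alph   :: "'a set"
  trans  :: "'q \<Rightarrow> 'a \<Rightarrow> 'q"
  init   :: "'q"
  final  :: "'q set"

definition dfa :: "('q, 'a) dfa \<Rightarrow> bool" where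
  "dfa M \<longleftrightarrow> finite (states M) \<and> finite (alph M) \<and> init M \<in> states M
     \<and> final M \<subseteq> states M
     \<and> (\<forall>q\<in>states M. \<forall>a\<in>alph M. trans M q a \<in> states M)"

fun delta_star :: "('q, 'a) dfa \<Rightarrow> 'q \<Rightarrow> 'a list \<Rightarrow> 'q" where
  "delta_star M q [] = q"
| "delta_star M q (a # w) = delta_star M (trans M q a) w"

definition lang :: "('q, 'a) dfa \<Rightarrow> 'a list set" where
  "lang M = {w. set w \<subseteq> alph M \<and> delta_star M (init M) w \<in> final M}"

definition distinguishable :: "('q, 'a) dfa \<Rightarrow> 'q \<Rightarrow> 'q \<Rightarrow> bool" where
  "distinguishable M q1 q2 \<longleftrightarrow>
     (\<exists>z. set z \<subseteq> alph M \<and>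
          (delta_star M q1 z \<in> final M \<longleftrightarrow> delta_star M q2 z \<notin> final M))"

definition partial_order_condition :: "('q, 'a) dfa \<Rightarrow> bool" where
  "partial_order_condition M \<longleftrightarrow>
     \<not> (\<exists>q1\<in>states M. \<exists>q2\<in>states M. \<exists>x y.
          distinguishable M q1 q2 \<and>
          x \<noteq> [] \<and> set x \<subseteq> alph M \<and> y \<noteq> [] \<and> set y \<subseteq> alph M \<and>
          delta_star M q1 x = q2 \<and> delta_star M q2 x = q2 \<and> delta_star M q2 y = q1)"

text \<open>Competitors are taken with states in nat, which
  is no loss since every finite DFA is isomorphic to one with natural-number states.\<close>
definition minimal_dfa_for :: "('p, 'a) dfa \<Rightarrow> 'a set \<Rightarrow> 'a list set \<Rightarrow> bool" where
  "minimal_dfa_for N \<Sigma> L \<longleftrightarrow> dfa N \<and> alph N = \<Sigma> \<and> lang N = L \<and>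
     (\<forall>K :: (nat, 'a) dfa. dfa K \<and> alph K = \<Sigma> \<and> lang K = L \<longrightarrow> card (states N) \<le> card (states K))"

end

theory Submission
  imports Defs "HOL-Library.FuncSet"
begin

text \<open>Suppose the minimal DFA \<open>N\<close> has a violating pair \<open>p\<^sub>1, p\<^sub>2\<close> with loop words \<open>x, y\<close>.
  Every state of \<open>N\<close> is reachable, say \<open>p\<^sub>1\<close> by \<open>u\<close>. A suitable power \<open>e = x\<^sup>m\<close> acts
  idempotently on the states of \<open>M\<close>, and then a power \<open>w = (e y)\<^sup>k\<close> does too. In \<open>N\<close> the words
  \<open>u w\<close> and \<open>u w e\<close> still lead to \<open>p\<^sub>1\<close> and \<open>p\<^sub>2\<close>, so the states of \<open>M\<close> they lead to are
  distinguishable (both automata accept the same language); by idempotence the first is sent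
  to the second by \<open>e\<close>, the second is fixed by \<open>e\<close>, and \<open>y (e y)\<^sup>k\<^sup>-\<^sup>1\<close> leads back to the first:
  a violation in \<open>M\<close>.\<close>

lemma delta_star_append:
  "delta_star M q (u @ v) = delta_star M (delta_star M q u) v"
  by (induction u arbitrary: q) auto

lemma delta_star_in_states:
  assumes "dfa M" "q \<in> states M" "set w \<subseteq> alph M"
  shows "delta_star M q w \<in> states M"
  using assms(2,3)
proof (induction w arbitrary: q)
  case (Cons a w)
  then have "trans M q a \<in> states M" using assms(1) unfolding dfa_def by auto
  with Cons show ?case by simp
qed simp

lemma delta_star_concat_replicate:
  "delta_star M q (concat (replicate m x)) = ((\<lambda>q. delta_star M q x) ^^ m) q"
  by (induction m arbitrary: q)
    (simp_all add: delta_star_append funpow_Suc_right del: funpow.simps)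

lemma delta_star_concat_replicate_fixed:
  assumes "delta_star M q x = q"
  shows "delta_star M q (concat (replicate m x)) = q"
  using assms by (induction m) (auto simp: delta_star_append)

lemma delta_star_final_iff_in_lang:
  assumes "set w \<subseteq> alph M" "set z \<subseteq> alph M"
  shows "delta_star M (delta_star M (init M) w) z \<in> final M \<longleftrightarrow> w @ z \<in> lang M"
  using assms by (simp add: lang_def delta_star_append)

lemma distinguishable_reached_iff:
  assumes "set v\<^sub>1 \<subseteq> alph M" "set v\<^sub>2 \<subseteq> alph M"
  shows "distinguishable M (delta_star M (init M) v\<^sub>1) (delta_star M (init M) v\<^sub>2) \<longleftrightarrow>
    (\<exists>z. set z \<subseteq> alph M \<and> (v\<^sub>1 @ z \<in> lang M \<longleftrightarrow> v\<^sub>2 @ z \<notin> lang M))"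
  using assms by (auto simp: distinguishable_def delta_star_final_iff_in_lang)

subsection \<open>Idempotent powers\<close>

lemma funpow_idempotent_power_exists:
  assumes "finite S" and maps_to: "\<forall>q\<in>S. f q \<in> S"
  shows "\<exists>m>0. \<forall>q\<in>S. (f ^^ m) ((f ^^ m) q) = (f ^^ m) q"
proof -
  have in_S: "(f ^^ n) q \<in> S" if "q \<in> S" for n q
    using that maps_to by (induction n) auto
  define F where "F n = restrict (f ^^ n) S" for n
  have "range F \<subseteq> S \<rightarrow>\<^sub>E S"
    using in_S unfolding F_def by auto
  moreover have "finite (S \<rightarrow>\<^sub>E S)"
    using \<open>finite S\<close> by (simp add: finite_PiE)
  ultimately have "finite (range F)"
    by (rule finite_subset)
  then have "\<not> inj F"
    using finite_imageD infinite_UNIV_nat by blast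
  then obtain i j where "i < j" "F i = F j"
    unfolding inj_def by (metis linorder_neqE_nat)
  then have ij: "(f ^^ i) q = (f ^^ j) q" if "q \<in> S" for q
    using that unfolding F_def by (metis restrict_apply')
  define p where "p = j - i"
  have period: "(f ^^ (a + p)) q = (f ^^ a) q" if "i \<le> a" "q \<in> S" for a q
  proof -
    have "a + p = (a - i) + j"
      using that \<open>i < j\<close> by (simp add: p_def)
    then have "(f ^^ (a + p)) q = (f ^^ (a - i)) ((f ^^ j) q)"
      by (simp add: funpow_add)
    also have "\<dots> = (f ^^ (a - i)) ((f ^^ i) q)"
      using ij that by simp
    also have "\<dots> = (f ^^ ((a - i) + i)) q"
      by (simp add: funpow_add)
    also have "\<dots> = (f ^^ a) q"
      using that by simp
    finally show ?thesis .
  qed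
  have periods: "(f ^^ (a + t * p)) q = (f ^^ a) q" if "i \<le> a" "q \<in> S" for a t q
  proof (induction t)
    case (Suc t)
    have "(f ^^ (a + Suc t * p)) q = (f ^^ ((a + t * p) + p)) q"
      by (simp add: algebra_simps)
    with Suc period that show ?case by simp
  qed simp
  define m where "m = Suc i * p"
  have "0 < p"
    using \<open>i < j\<close> by (simp add: p_def)
  then have "0 < m" "i \<le> m"
    by (simp_all add: m_def trans_le_add2)
  moreover have "(f ^^ m) ((f ^^ m) q) = (f ^^ m) q" if "q \<in> S" for q
    using periods[OF \<open>i \<le> m\<close> that, of "Suc i"] by (simp add: m_def funpow_add)
  ultimately show ?thesis by blast
qed

lemma delta_star_idempotent_power_exists:
  assumes "dfa M" "set x \<subseteq> alph M"
  shows "\<exists>m>0. \<forall>q\<in>states M. delta_star M (delta_star M q (concat (replicate m x)))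
    (concat (replicate m x)) = delta_star M q (concat (replicate m x))"
proof -
  have "finite (states M)"
    using assms(1) by (simp add: dfa_def)
  moreover have "\<forall>q\<in>states M. delta_star M q x \<in> states M"
    using delta_star_in_states[OF assms(1) _ assms(2)] by blast
  ultimately show ?thesis
    using funpow_idempotent_power_exists[of "states M" "\<lambda>q. delta_star M q x"]
    by (simp only: delta_star_concat_replicate)
qed

subsection \<open>States of a minimal DFA are reachable\<close>

definition reachable_states :: "('q, 'a) dfa \<Rightarrow> 'q set" where
  "reachable_states M = {delta_star M (init M) w | w. set w \<subseteq> alph M}"

definition restrict_reachable :: "('q, 'a) dfa \<Rightarrow> ('q, 'a) dfa" where
  "restrict_reachable M =
    M\<lparr>states := reachable_states M, final := final M \<inter> reachable_states M\<rparr>"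

definition rename_states :: "('q \<Rightarrow> 'r) \<Rightarrow> ('q, 'a) dfa \<Rightarrow> ('r, 'a) dfa" where
  "rename_states f M = \<lparr>states = f ` states M, alph = alph M,
     trans = (\<lambda>r a. f (trans M (inv_into (states M) f r) a)),
     init = f (init M), final = f ` final M\<rparr>"

lemma reachable_states_subset:
  "dfa M \<Longrightarrow> reachable_states M \<subseteq> states M"
  by (auto simp: reachable_states_def dfa_def intro: delta_star_in_states)

lemma trans_in_reachable_states:
  assumes "q \<in> reachable_states M" "a \<in> alph M"
  shows "trans M q a \<in> reachable_states M"
proof -
  obtain w where "set w \<subseteq> alph M" "q = delta_star M (init M) w"
    using assms(1) unfolding reachable_states_def by auto
  then show ?thesis
    using assms(2) unfolding reachable_states_def
    by (auto intro!: exI[of _ "w @ [a]"] simp: delta_star_append)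
qed

lemma dfa_restrict_reachable:
  assumes "dfa M"
  shows "dfa (restrict_reachable M)"
proof -
  have "init M \<in> reachable_states M"
    unfolding reachable_states_def by (auto intro: exI[of _ "[]"])
  then show ?thesis
    using assms reachable_states_subset[OF assms] finite_subset trans_in_reachable_states
    by (auto simp: dfa_def restrict_reachable_def)
qed

lemma delta_star_restrict_reachable:
  "delta_star (restrict_reachable M) q w = delta_star M q w"
  by (induction w arbitrary: q) (simp_all add: restrict_reachable_def)

lemma lang_restrict_reachable:
  "lang (restrict_reachable M) = lang M"
  unfolding lang_def delta_star_restrict_reachable
  by (auto simp: restrict_reachable_def reachable_states_def)

lemma delta_star_rename_states:
  assumes "dfa M" "inj_on f (states M)" "q \<in> states M" "set w \<subseteq> alph M"
  shows "delta_star (rename_states f M) (f q) w = f (delta_star M q w)"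
  using assms(3,4)
proof (induction w arbitrary: q)
  case (Cons a w)
  then have "trans M q a \<in> states M"
    using assms(1) by (simp add: dfa_def)
  with Cons assms(2) show ?case
    by (simp add: rename_states_def)
qed simp

lemma dfa_rename_states:
  assumes "dfa M" "inj_on f (states M)"
  shows "dfa (rename_states f M)"
  using assms by (auto simp: dfa_def rename_states_def)

lemma lang_rename_states:
  assumes "dfa M" "inj_on f (states M)"
  shows "lang (rename_states f M) = lang M"
proof -
  have "delta_star (rename_states f M) (init (rename_states f M)) w \<in> final (rename_states f M)
      \<longleftrightarrow> delta_star M (init M) w \<in> final M" if "set w \<subseteq> alph M" for w
  proof -
    have "delta_star M (init M) w \<in> states M" "final M \<subseteq> states M"
      using assms(1) that by (simp_all add: dfa_def delta_star_in_states)
    then show ?thesis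
      using assms that delta_star_rename_states[OF assms, of "init M" w]
      by (auto simp: rename_states_def dfa_def inj_on_image_mem_iff)
  qed
  then show ?thesis
    by (auto simp: lang_def rename_states_def)
qed

lemma nat_dfa_with_same_lang:
  fixes M :: "('q, 'a) dfa"
  assumes "dfa M"
  obtains K :: "(nat, 'a) dfa"
  where "dfa K" "alph K = alph M" "lang K = lang M" "card (states K) = card (states M)"
proof -
  obtain f :: "'q \<Rightarrow> nat" where f: "inj_on f (states M)"
    using assms finite_imp_inj_to_nat_seg unfolding dfa_def by metis
  show ?thesis
    using that[of "rename_states f M"] dfa_rename_states[OF assms f]
      lang_rename_states[OF assms f] f
    by (simp add: rename_states_def card_image)
qed

lemma minimal_dfa_states_reachable:
  fixes N :: "('q, 'a) dfa"
  assumes "minimal_dfa_for N \<Sigma> L"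
  shows "states N = reachable_states N"
proof -
  have N: "dfa N" "alph N = \<Sigma>" "lang N = L"
    using assms by (simp_all add: minimal_dfa_for_def)
  obtain K :: "(nat, 'a) dfa" where "dfa K" "alph K = alph (restrict_reachable N)"
    "lang K = lang (restrict_reachable N)" "card (states K) = card (states (restrict_reachable N))"
    using nat_dfa_with_same_lang[OF dfa_restrict_reachable[OF N(1)]] by blast
  then have K: "dfa K" "alph K = \<Sigma>" "lang K = L"
    and card_K: "card (states K) = card (reachable_states N)"
    using N by (simp_all add: lang_restrict_reachable) (simp_all add: restrict_reachable_def)
  have "card (states N) \<le> card (reachable_states N)"
    using assms K card_K by (auto simp: minimal_dfa_for_def)
  moreover have "finite (states N)"
    using N(1) by (simp add: dfa_def)
  ultimately show ?thesis
    using reachable_states_subset[OF N(1)] by (metis card_seteq)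
qed

subsection \<open>Lifting a violation from the minimal DFA\<close>

definition partial_order_violation ::
    "('q, 'a) dfa \<Rightarrow> 'q \<Rightarrow> 'q \<Rightarrow> 'a list \<Rightarrow> 'a list \<Rightarrow> bool" where
  "partial_order_violation M q\<^sub>1 q\<^sub>2 x y \<longleftrightarrow> distinguishable M q\<^sub>1 q\<^sub>2 \<and>
     x \<noteq> [] \<and> set x \<subseteq> alph M \<and> y \<noteq> [] \<and> set y \<subseteq> alph M \<and>
     delta_star M q\<^sub>1 x = q\<^sub>2 \<and> delta_star M q\<^sub>2 x = q\<^sub>2 \<and> delta_star M q\<^sub>2 y = q\<^sub>1"

lemma partial_order_condition_iff:
  "partial_order_condition M \<longleftrightarrow>
     \<not> (\<exists>q\<^sub>1\<in>states M. \<exists>q\<^sub>2\<in>states M. \<exists>x y. partial_order_violation M q\<^sub>1 q\<^sub>2 x y)"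
  by (simp add: partial_order_condition_def partial_order_violation_def)

lemma partial_order_violation_power:
  assumes "partial_order_violation M q\<^sub>1 q\<^sub>2 x y" "0 < m"
  shows "partial_order_violation M q\<^sub>1 q\<^sub>2 (concat (replicate m x)) y"
proof -
  obtain n where "m = Suc n"
    using \<open>0 < m\<close> gr0_implies_Suc by blast
  then show ?thesis
    using assms(1) delta_star_concat_replicate_fixed[of M q\<^sub>2 x]
    by (auto simp: partial_order_violation_def delta_star_append)
qed

lemma partial_order_violation_lift:
  assumes M: "dfa M" and same_alph: "alph N = alph M" and same_lang: "lang N = lang M"
    and u: "set u \<subseteq> alph M" "delta_star N (init N) u = p\<^sub>1"
    and violation: "partial_order_violation N p\<^sub>1 p\<^sub>2 x y"
  shows "\<exists>q\<^sub>1\<in>states M. \<exists>q\<^sub>2\<in>states M. \<exists>x' y'. partial_order_violation M q\<^sub>1 q\<^sub>2 x' y'"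
proof -
  have x: "set x \<subseteq> alph M" and y: "y \<noteq> []" "set y \<subseteq> alph M"
    using violation same_alph by (auto simp: partial_order_violation_def)
  obtain m where "0 < m" and "\<forall>q\<in>states M. delta_star M (delta_star M q (concat (replicate m x)))
      (concat (replicate m x)) = delta_star M q (concat (replicate m x))"
    using delta_star_idempotent_power_exists[OF M x] by blast
  moreover define e where "e = concat (replicate m x)"
  ultimately have e_idem: "\<forall>q\<in>states M. delta_star M (delta_star M q e) e = delta_star M q e"
    by simp
  have e: "partial_order_violation N p\<^sub>1 p\<^sub>2 e y"
    using partial_order_violation_power[OF violation \<open>0 < m\<close>] by (simp add: e_def)
  then have "set (e @ y) \<subseteq> alph M"
    using same_alph by (simp add: partial_order_violation_def)
  then obtain k where "0 < k" and "\<forall>q\<in>states M.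
      delta_star M (delta_star M q (concat (replicate k (e @ y)))) (concat (replicate k (e @ y)))
      = delta_star M q (concat (replicate k (e @ y)))"
    using delta_star_idempotent_power_exists[OF M] by blast
  moreover define w where "w = concat (replicate k (e @ y))"
  ultimately have w_idem: "\<forall>q\<in>states M. delta_star M (delta_star M q w) w = delta_star M q w"
    by simp
  define q\<^sub>1 where "q\<^sub>1 = delta_star M (init M) (u @ w)"
  define q\<^sub>2 where "q\<^sub>2 = delta_star M (init M) (u @ w @ e)"
  define y' where "y' = y @ concat (replicate (k - 1) (e @ y))"
  have words: "set w \<subseteq> alph M" "set e \<subseteq> alph M" "e \<noteq> []" "set y' \<subseteq> alph M" "y' \<noteq> []"
    using e y same_alph by (auto simp: w_def y'_def partial_order_violation_def)
  have q_states: "q\<^sub>1 \<in> states M" "q\<^sub>2 \<in> states M"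
    using M u words by (auto simp: q\<^sub>1_def q\<^sub>2_def dfa_def intro!: delta_star_in_states)
  have "delta_star N p\<^sub>1 w = p\<^sub>1"
    using e unfolding w_def partial_order_violation_def
    by (intro delta_star_concat_replicate_fixed) (simp add: delta_star_append)
  then have "delta_star N (init N) (u @ w) = p\<^sub>1" "delta_star N (init N) (u @ w @ e) = p\<^sub>2"
    using u(2) e by (simp_all add: delta_star_append partial_order_violation_def)
  then have "distinguishable M q\<^sub>1 q\<^sub>2"
    using e u words same_alph same_lang distinguishable_reached_iff[of "u @ w" N "u @ w @ e"]
      distinguishable_reached_iff[of "u @ w" M "u @ w @ e"]
    by (simp add: q\<^sub>1_def q\<^sub>2_def partial_order_violation_def)
  moreover have "delta_star M q\<^sub>1 e = q\<^sub>2"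
    by (simp add: q\<^sub>1_def q\<^sub>2_def delta_star_append)
  moreover from this have "delta_star M q\<^sub>2 e = q\<^sub>2"
    using e_idem q_states(1) by metis
  moreover have "delta_star M q\<^sub>2 y' = q\<^sub>1"
  proof -
    have "e @ y' = w"
      using \<open>0 < k\<close> by (cases k) (simp_all add: w_def y'_def)
    then have "delta_star M q\<^sub>2 y' = delta_star M q\<^sub>1 w"
      using \<open>delta_star M q\<^sub>1 e = q\<^sub>2\<close> by (metis delta_star_append)
    also have "\<dots> = q\<^sub>1"
      using w_idem M u words by (simp add: q\<^sub>1_def delta_star_append dfa_def delta_star_in_states)
    finally show ?thesis .
  qed
  ultimately have "partial_order_violation M q\<^sub>1 q\<^sub>2 e y'"
    using words by (simp add: partial_order_violation_def)
  with q_states show ?thesis by blast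
qed

theorem lemma4p4:
  fixes M :: "('q, 'a) dfa" and N :: "('p, 'a) dfa"
  assumes "dfa M"
    and "partial_order_condition M"
    and "minimal_dfa_for N (alph M) (lang M)"
  shows "partial_order_condition N"
proof -
  have same: "alph N = alph M" "lang N = lang M"
    using assms(3) by (simp_all add: minimal_dfa_for_def)
  have "\<not> partial_order_violation N p\<^sub>1 p\<^sub>2 x y" if p\<^sub>1: "p\<^sub>1 \<in> states N" for p\<^sub>1 p\<^sub>2 x y
  proof
    assume violation: "partial_order_violation N p\<^sub>1 p\<^sub>2 x y"
    obtain u where "set u \<subseteq> alph M" "delta_star N (init N) u = p\<^sub>1"
      using p\<^sub>1 minimal_dfa_states_reachable[OF assms(3)] same
      by (auto simp: reachable_states_def)
    from partial_order_violation_lift[OF assms(1) same this violation] assms(2)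
    show False by (simp add: partial_order_condition_iff)
  qed
  then show ?thesis
    by (simp add: partial_order_condition_iff)
qed

end
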